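(* Let $n\geq l\geq 3$ be integers. If $G$ is an $n$-vertex unicyclic graph with girth $l$, then $$n(US_n^l)\geq n(G)\geq n(UP_n^l).$$
   Context: A unicyclic graph is a connected graph containing exactly one cycle; its girth is the length of that cycle. A subtree of a graph $G$ is a subgraph of $G$ that is a tree (subtrees are distinguished as subgraphs); $n(G)$ is the number of subtrees of $G$, counting also the empty subtree. $US_n^l$ is the graph obtained from the cycle $C_l$ by attaching $n-l$ pendent vertices to one vertex of the cycle. $UP_n^l$ is the graph obtained from $C_l$ by attaching a pendent path of length $n-l$ to one vertex of the cycle (i.e. identifying a cycle vertex with an end vertex of a path with $n-l$ edges whose other vertices are new). *)

theory Defs
  imports Main
begin

type_synonym 'a graph = "'a set \<times> 'a set set"

definition simple_graph :: "'a graph \<Rightarrow> bool" where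
  "simple_graph G \<longleftrightarrow> finite (fst G) \<and> (\<forall>e\<in>snd G. e \<subseteq> fst G \<and> card e = 2)"

definition adj :: "'a set set \<Rightarrow> 'a \<Rightarrow> 'a \<Rightarrow> bool" where
  "adj E u v \<longleftrightarrow> {u, v} \<in> E"

definition connected_graph :: "'a graph \<Rightarrow> bool" where
  "connected_graph G \<longleftrightarrow> (\<forall>u\<in>fst G. \<forall>v\<in>fst G. (adj (snd G))\<^sup>*\<^sup>* u v)"

definition cycle_edges :: "'a list \<Rightarrow> 'a set set" where
  "cycle_edges vs = {{vs ! i, vs ! ((i + 1) mod length vs)} | i. i < length vs}"

definition is_cycle :: "'a graph \<Rightarrow> 'a set set \<Rightarrow> bool" where
  "is_cycle G C \<longleftrightarrow> (\<exists>vs. distinct vs \<and> length vs \<ge> 3 \<and> set vs \<subseteq> fst G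
      \<and> C = cycle_edges vs \<and> C \<subseteq> snd G)"

definition acyclic_graph :: "'a graph \<Rightarrow> bool" where
  "acyclic_graph G \<longleftrightarrow> \<not> (\<exists>C. is_cycle G C)"

definition is_tree :: "'a graph \<Rightarrow> bool" where
  "is_tree G \<longleftrightarrow> fst G \<noteq> {} \<and> connected_graph G \<and> acyclic_graph G"

definition subgraph :: "'a graph \<Rightarrow> 'a graph \<Rightarrow> bool" where
  "subgraph H G \<longleftrightarrow> fst H \<subseteq> fst G \<and> snd H \<subseteq> snd G \<and> (\<forall>e\<in>snd H. e \<subseteq> fst H)"

text \<open>Number of subtrees of G, counting also the empty subtree.\<close>
definition num_subtrees :: "'a graph \<Rightarrow> nat" where
  "num_subtrees G = card {H. subgraph H G \<and> is_tree H} + 1"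

definition unicyclic :: "'a graph \<Rightarrow> bool" where
  "unicyclic G \<longleftrightarrow> simple_graph G \<and> connected_graph G \<and> (\<exists>!C. is_cycle G C)"

definition girth :: "'a graph \<Rightarrow> nat" where
  "girth G = (LEAST k. \<exists>C. is_cycle G C \<and> card C = k)"

definition cycle_graph_edges :: "nat \<Rightarrow> nat set set" where
  "cycle_graph_edges l = {{i, (i + 1) mod l} | i. i < l}"

text \<open>US_n^l: C_l with n-l pendent vertices l,...,n-1 attached to vertex 0.\<close>
definition US :: "nat \<Rightarrow> nat \<Rightarrow> nat graph" where
  "US n l = ({0..<n}, cycle_graph_edges l \<union> {{0, j} | j. l \<le> j \<and> j < n})"

text \<open>UP_n^l: C_l with a pendent path 0 - l - (l+1) - ... - (n-1) of length n-l.\<close>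
definition UP :: "nat \<Rightarrow> nat \<Rightarrow> nat graph" where
  "UP n l = ({0..<n}, cycle_graph_edges l \<union>
      {{if j = l then 0 else j - 1, j} | j. l \<le> j \<and> j < n})"

end

theory Submission
  imports Defs
begin

text \<open>
  Deleting a pendant vertex \<open>v\<close> with neighbour \<open>w\<close> destroys exactly the subtrees through \<open>v\<close>:
  the single vertex \<open>v\<close> and the trees \<open>T + vw\<close> for the subtrees \<open>T\<close> of \<open>G - v\<close> through \<open>w\<close>.
  Writing \<open>t(G, A)\<close> for the number of subtrees containing \<open>A\<close>, this gives
  \<open>n(G) = n(G - v) + 1 + t(G - v, {w})\<close>, \<open>t(G, {v}) = 1 + t(G - v, {w})\<close> and
  \<open>t(G, {u}) = t(G - v, {u}) + t(G - v, {u, w})\<close> for \<open>u \<noteq> v\<close>.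
  A unicyclic graph of girth \<open>l\<close> with more than \<open>l\<close> vertices has a pendant vertex (the end of a
  longest path leaving the cycle) whose deletion keeps it unicyclic of girth \<open>l\<close>, and with exactly
  \<open>l\<close> vertices it is \<open>C\<^sub>l\<close>. As a unicyclic graph has a spanning tree,
  \<open>1 \<le> t(G - v, {u, w}) \<le> t(G - v, {u})\<close>, so induction on \<open>n\<close> gives
  \<open>(n - l) + c \<le> t(G, {u}) \<le> 2^(n - l) c\<close> for every vertex \<open>u\<close>, where \<open>c = t(C\<^sub>l, {0})\<close>.
  The lower bound is attained at the end of the path of \<open>UP\<close>, the upper one at the centre of
  \<open>US\<close>; inserted into the recursion for \<open>n\<close> they give \<open>n(UP) \<le> n(G) \<le> n(US)\<close>.
\<close>

definition subtrees :: "'a graph \<Rightarrow> 'a graph set" where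
  "subtrees G = {H. subgraph H G \<and> is_tree H}"

definition subtrees_through :: "'a graph \<Rightarrow> 'a set \<Rightarrow> 'a graph set" where
  "subtrees_through G A = {T \<in> subtrees G. A \<subseteq> fst T}"

lemma subtrees_through_empty [simp]: "subtrees_through G {} = subtrees G"
  unfolding subtrees_through_def by simp

lemma finite_subtrees:
  assumes "simple_graph G"
  shows "finite (subtrees G)"
proof -
  have "snd G \<subseteq> Pow (fst G)"
    using assms unfolding simple_graph_def by blast
  then have "finite (Pow (fst G) \<times> Pow (snd G))"
    using assms unfolding simple_graph_def by (auto intro: finite_subset)
  moreover have "subtrees G \<subseteq> Pow (fst G) \<times> Pow (snd G)"
    unfolding subtrees_def subgraph_def by auto
  ultimately show ?thesis
    by (rule finite_subset[rotated])
qed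

lemma finite_subtrees_through: "simple_graph G \<Longrightarrow> finite (subtrees_through G A)"
  unfolding subtrees_through_def by (rule finite_subset[OF _ finite_subtrees]) auto

lemma card_subtrees_through_antimono:
  assumes "simple_graph G" and "A \<subseteq> B"
  shows "card (subtrees_through G B) \<le> card (subtrees_through G A)"
  using assms by (intro card_mono finite_subtrees_through) (auto simp: subtrees_through_def)

section \<open>Reachability\<close>

lemma symp_adj: "symp (adj E)"
  unfolding adj_def by (intro sympI) (simp add: insert_commute)

lemma reachable_sym: "(adj E)\<^sup>*\<^sup>* u v \<Longrightarrow> (adj E)\<^sup>*\<^sup>* v u"
  using symp_rtranclp[OF symp_adj] by (rule sympD)

lemma reachable_mono:
  assumes "E \<subseteq> E'" and "(adj E)\<^sup>*\<^sup>* u v"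
  shows "(adj E')\<^sup>*\<^sup>* u v"
proof -
  have "adj E \<le> adj E'"
    using assms(1) unfolding adj_def by auto
  then show ?thesis
    using assms(2) rtranclp_mono by (metis predicate2D)
qed

lemma reachable_image:
  "(adj E)\<^sup>*\<^sup>* a b \<Longrightarrow> (adj ((`) f ` E))\<^sup>*\<^sup>* (f a) (f b)"
proof (induction rule: rtranclp_induct)
  case (step y z)
  have "{y, z} \<in> E"
    using step.hyps(2) unfolding adj_def .
  then have "f ` {y, z} \<in> (`) f ` E"
    by (rule imageI)
  then have "adj ((`) f ` E) (f y) (f z)"
    unfolding adj_def by simp
  with step.IH show ?case by (rule rtranclp.rtrancl_into_rtrancl)
qed simp

lemma reachable_crossing_edge:
  assumes "(adj E)\<^sup>*\<^sup>* a b" and "a \<in> S" and "b \<notin> S"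
  shows "\<exists>z z'. {z, z'} \<in> E \<and> z \<in> S \<and> z' \<notin> S"
  using assms
proof (induction rule: rtranclp_induct)
  case (step y z)
  then show ?case
    by (cases "y \<in> S") (auto simp: adj_def)
qed simp

lemma reachable_remove_edge:
  assumes "(adj E)\<^sup>*\<^sup>* u z" and "(adj (E - {{a, b}}))\<^sup>*\<^sup>* a b"
  shows "(adj (E - {{a, b}}))\<^sup>*\<^sup>* u z"
  using assms(1)
proof (induction rule: rtranclp_induct)
  case (step y z)
  have "(adj (E - {{a, b}}))\<^sup>*\<^sup>* y z"
  proof (cases "{y, z} = {a, b}")
    case True
    then show ?thesis
      using assms(2) reachable_sym[OF assms(2)] by (auto simp: doubleton_eq_iff)
  next
    case False
    with step.hyps(2) have "adj (E - {{a, b}}) y z"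
      by (simp add: adj_def)
    then show ?thesis by simp
  qed
  with step.IH show ?case by (rule rtranclp_trans)
qed simp

lemma reachable_remove_pendant:
  assumes "(adj E)\<^sup>*\<^sup>* u z" and "u \<noteq> v" and "z \<noteq> v" and "w \<noteq> v"
    and "\<forall>e\<in>E. v \<in> e \<longrightarrow> e = {v, w}"
  shows "(adj {e\<in>E. v \<notin> e})\<^sup>*\<^sup>* u z"
proof -
  \<comment> \<open>A walk can enter v only from w, so while it sits at v we track w instead.\<close>
  have "(z \<noteq> v \<longrightarrow> (adj {e\<in>E. v \<notin> e})\<^sup>*\<^sup>* u z) \<and> (z = v \<longrightarrow> (adj {e\<in>E. v \<notin> e})\<^sup>*\<^sup>* u w)"
    using assms(1)
  proof (induction rule: rtranclp_induct)
    case (step y z)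
    have yz: "{y, z} \<in> E"
      using step.hyps(2) unfolding adj_def .
    consider "z = v" | "y = v" "z \<noteq> v" | "y \<noteq> v" "z \<noteq> v"
      by blast
    then show ?case
    proof cases
      case 1
      then have "y = w"
        using yz assms(4,5) by (auto simp: doubleton_eq_iff)
      with 1 step.IH assms(4) show ?thesis by auto
    next
      case 2
      then have "z = w"
        using yz assms(5) by (auto simp: doubleton_eq_iff)
      with 2 step.IH show ?thesis by auto
    next
      case 3
      then have "adj {e\<in>E. v \<notin> e} y z"
        using yz unfolding adj_def by auto
      with 3 step.IH show ?thesis by (auto intro: rtranclp.rtrancl_into_rtrancl)
    qed
  qed (use assms(2) in simp)
  then show ?thesis using assms(3) by blast
qed

section \<open>Cycles and walks\<close>

lemma cycle_edges_nth:
  "i < length vs \<Longrightarrow> {vs ! i, vs ! ((i + 1) mod length vs)} \<in> cycle_edges vs"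
  unfolding cycle_edges_def by auto

lemma cycle_edges_Suc: "Suc i < length vs \<Longrightarrow> {vs ! i, vs ! Suc i} \<in> cycle_edges vs"
  using cycle_edges_nth[of i vs] by simp

lemma cycle_edges_last: "vs \<noteq> [] \<Longrightarrow> {vs ! (length vs - 1), vs ! 0} \<in> cycle_edges vs"
  using cycle_edges_nth[of "length vs - 1" vs] by simp

lemma cycle_edges_eq_image:
  "cycle_edges vs = (\<lambda>i. {vs ! i, vs ! ((i + 1) mod length vs)}) ` {..<length vs}"
  unfolding cycle_edges_def by auto

lemma Union_cycle_edges: "\<Union> (cycle_edges vs) = set vs"
proof
  show "\<Union> (cycle_edges vs) \<subseteq> set vs"
    unfolding cycle_edges_def by auto (metis length_pos_if_in_set mod_less_divisor nth_mem)
  show "set vs \<subseteq> \<Union> (cycle_edges vs)"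
  proof
    fix x
    assume "x \<in> set vs"
    then obtain i where "i < length vs" "x = vs ! i"
      by (auto simp: in_set_conv_nth)
    then show "x \<in> \<Union> (cycle_edges vs)"
      using cycle_edges_nth[of i vs] by blast
  qed
qed

lemma card_cycle_edges:
  assumes "distinct vs" and "3 \<le> length vs"
  shows "card (cycle_edges vs) = length vs"
proof -
  let ?k = "length vs"
  let ?f = "\<lambda>i. {vs ! i, vs ! ((i + 1) mod ?k)}"
  have "inj_on ?f {..<?k}"
  proof
    fix i j
    assume i: "i \<in> {..<?k}" and j: "j \<in> {..<?k}" and eq: "?f i = ?f j"
    have "0 < ?k"
      using assms(2) by linarith
    then have i1: "(i + 1) mod ?k < ?k" and j1: "(j + 1) mod ?k < ?k"
      by simp_all
    have index_eq: "vs ! a = vs ! b \<longleftrightarrow> a = b" if "a < ?k" "b < ?k" for a b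
      using nth_eq_iff_index_eq[OF assms(1) that] .
    from eq consider "vs ! i = vs ! j" | "vs ! i = vs ! ((j + 1) mod ?k)" "vs ! ((i + 1) mod ?k) = vs ! j"
      by (auto simp: doubleton_eq_iff)
    then show "i = j"
    proof cases
      case 1
      with i j index_eq show ?thesis by simp
    next
      case 2
      then have "i = (j + 1) mod ?k" and "j = (i + 1) mod ?k"
        using i j i1 j1 index_eq by simp_all
      then have "(i + 2) mod ?k = i mod ?k"
        using i by (simp add: mod_Suc_eq)
      then have "?k dvd 2"
        by (metis add.commute add_diff_cancel_right' mod_eq_dvd_iff_nat le_add2)
      with assms(2) show ?thesis by (simp add: nat_dvd_not_less)
    qed
  qed
  then show ?thesis
    unfolding cycle_edges_eq_image[of vs] by (simp add: card_image)
qed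

lemma cycle_edges_rotate_subset: "cycle_edges (rotate r vs) \<subseteq> cycle_edges vs"
proof
  let ?k = "length vs"
  fix x
  assume "x \<in> cycle_edges (rotate r vs)"
  then obtain i where i: "i < ?k"
    and x: "x = {rotate r vs ! i, rotate r vs ! ((i + 1) mod ?k)}"
    unfolding cycle_edges_def by auto
  have "0 < ?k"
    using i by linarith
  then have "rotate r vs ! ((i + 1) mod ?k) = vs ! ((r + (i + 1) mod ?k) mod ?k)"
    by (simp add: nth_rotate)
  also have "(r + (i + 1) mod ?k) mod ?k = ((r + i) mod ?k + 1) mod ?k"
    by (simp add: mod_add_right_eq mod_Suc_eq)
  finally have "x = {vs ! ((r + i) mod ?k), vs ! (((r + i) mod ?k + 1) mod ?k)}"
    using x i by (simp add: nth_rotate)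
  then show "x \<in> cycle_edges vs"
    using cycle_edges_nth[of "(r + i) mod ?k" vs] \<open>0 < ?k\<close> by simp
qed

lemma cycle_edges_rotate: "cycle_edges (rotate r vs) = cycle_edges vs"
proof (cases "vs = []")
  case False
  let ?k = "length vs"
  have "r mod ?k < ?k"
    using False by simp
  then have "rotate (?k - r mod ?k) (rotate (r mod ?k) vs) = rotate ?k vs"
    by (simp add: rotate_rotate)
  then have "rotate (?k - r mod ?k) (rotate r vs) = vs"
    by (simp add: rotate_conv_mod[of r vs])
  then have "cycle_edges vs \<subseteq> cycle_edges (rotate r vs)"
    using cycle_edges_rotate_subset[of "?k - r mod ?k" "rotate r vs"] by simp
  then show ?thesis
    using cycle_edges_rotate_subset by blast
qed simp

lemma rotate_to_front:
  assumes "x \<in> set vs"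
  obtains R where "distinct R = distinct vs" and "set R = set vs" and "length R = length vs"
    and "cycle_edges R = cycle_edges vs" and "R ! 0 = x"
proof -
  obtain i where i: "i < length vs" "vs ! i = x"
    using assms by (auto simp: in_set_conv_nth)
  then have "rotate i vs ! 0 = x"
    using nth_rotate[of 0 vs i] by (cases vs) auto
  then show ?thesis
    using that[of "rotate i vs"] by (simp add: cycle_edges_rotate)
qed

definition walk :: "'a set set \<Rightarrow> 'a list \<Rightarrow> bool" where
  "walk E p \<longleftrightarrow> (\<forall>i. Suc i < length p \<longrightarrow> {p ! i, p ! Suc i} \<in> E)"

lemma walk_singleton: "walk E [y]"
  unfolding walk_def by simp

lemma walk_drop: "walk E p \<Longrightarrow> walk E (drop i p)"
  unfolding walk_def by (auto simp: add.commute[of i])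

lemma walk_take: "walk E p \<Longrightarrow> walk E (take i p)"
  unfolding walk_def by auto

lemma walk_cycle_edges: "cycle_edges R \<subseteq> E \<Longrightarrow> walk E R"
  unfolding walk_def using cycle_edges_Suc by blast

lemma walk_first_edge:
  assumes "walk E p" and "2 \<le> length p"
  shows "{hd p, hd (tl p)} \<in> E"
proof -
  have "{p ! 0, p ! Suc 0} \<in> E"
    using assms unfolding walk_def by simp
  moreover have "hd p = p ! 0" and "hd (tl p) = p ! Suc 0"
    using assms(2) by (cases p; cases "tl p"; simp)+
  ultimately show ?thesis
    by simp
qed

lemma walk_last_edge:
  assumes "walk E p" and "2 \<le> length p"
  shows "{p ! (length p - 2), last p} \<in> E"
proof -
  have "Suc (length p - 2) < length p" and "Suc (length p - 2) = length p - 1"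
    using assms(2) by simp_all
  with assms show ?thesis
    unfolding walk_def by (metis last_conv_nth list.size(3) not_numeral_le_zero)
qed

lemma walk_append:
  assumes "walk E xs" and "walk E ys" and "xs \<noteq> []" and "ys \<noteq> []" and "{last xs, hd ys} \<in> E"
  shows "walk E (xs @ ys)"
  unfolding walk_def
proof (intro allI impI)
  fix i
  assume i: "Suc i < length (xs @ ys)"
  consider "Suc i < length xs" | "i = length xs - 1" | "length xs \<le> i"
    by linarith
  then show "{(xs @ ys) ! i, (xs @ ys) ! Suc i} \<in> E"
  proof cases
    case 1
    with assms(1) show ?thesis unfolding walk_def by (simp add: nth_append)
  next
    case 2
    with assms(3-5) show ?thesis by (simp add: nth_append last_conv_nth hd_conv_nth)
  next
    case 3
    with i assms(2) show ?thesis unfolding walk_def by (simp add: nth_append Suc_diff_le)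
  qed
qed

lemma is_cycle_closed_walk:
  assumes "distinct L" and "3 \<le> length L" and "set L \<subseteq> fst G"
    and "walk (snd G) L" and "{last L, hd L} \<in> snd G"
  shows "is_cycle G (cycle_edges L)"
proof -
  have "cycle_edges L \<subseteq> snd G"
  proof
    fix x
    assume "x \<in> cycle_edges L"
    then obtain i where i: "i < length L" and x: "x = {L ! i, L ! ((i + 1) mod length L)}"
      unfolding cycle_edges_def by auto
    show "x \<in> snd G"
    proof (cases "Suc i < length L")
      case True
      with assms(4) x show ?thesis unfolding walk_def by simp
    next
      case False
      then have "i = length L - 1" and "L \<noteq> []"
        using i by auto
      then have "x = {last L, hd L}"
        using x by (simp add: last_conv_nth hd_conv_nth)
      with assms(5) show ?thesis by simp
    qed
  qed
  with assms(1-3) show ?thesis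
    unfolding is_cycle_def by blast
qed

lemma is_cycle_mono:
  assumes "is_cycle G C" and "fst G \<subseteq> fst G'" and "snd G \<subseteq> snd G'"
  shows "is_cycle G' C"
  using assms unfolding is_cycle_def by blast

lemma cycle_vertex_not_pendant:
  assumes "distinct vs" and "3 \<le> length vs" and "cycle_edges vs \<subseteq> E" and "x \<in> set vs"
    and "\<forall>e\<in>E. x \<in> e \<longrightarrow> e = {x, w}"
  shows False
proof -
  obtain R where R: "distinct R" "length R = length vs" "cycle_edges R = cycle_edges vs" "R ! 0 = x"
    using rotate_to_front[OF assms(4)] assms(1) by metis
  let ?k = "length R"
  have k: "3 \<le> ?k"
    using R(2) assms(2) by simp
  then have "R \<noteq> []"
    by auto
  with k have "{R ! 0, R ! 1} \<in> E" and "{R ! (?k - 1), R ! 0} \<in> E"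
    using cycle_edges_Suc[of 0 R] cycle_edges_last[of R] R(3) assms(3) by auto
  then have "R ! 1 = w" and "R ! (?k - 1) = w"
    using assms(5) R(4) by (auto simp: doubleton_eq_iff)
  moreover have "R ! (?k - 1) \<noteq> R ! 1"
    using nth_eq_iff_index_eq[OF R(1), of "?k - 1" 1] k by simp
  ultimately show False by simp
qed

section \<open>Subtrees through a pendant vertex\<close>

definition delete_vertex :: "'a graph \<Rightarrow> 'a \<Rightarrow> 'a graph" where
  "delete_vertex G v = (fst G - {v}, {e \<in> snd G. v \<notin> e})"

definition add_leaf :: "'a \<Rightarrow> 'a \<Rightarrow> 'a graph \<Rightarrow> 'a graph" where
  "add_leaf v w T = (insert v (fst T), insert {v, w} (snd T))"

definition is_leaf :: "'a graph \<Rightarrow> 'a \<Rightarrow> 'a \<Rightarrow> bool" where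
  "is_leaf G v w \<longleftrightarrow> simple_graph G \<and> v \<in> fst G \<and> w \<noteq> v \<and> {e \<in> snd G. v \<in> e} = {{v, w}}"

lemma simple_graph_delete_vertex: "simple_graph G \<Longrightarrow> simple_graph (delete_vertex G v)"
  unfolding simple_graph_def delete_vertex_def by auto

lemma is_leaf_neighbour:
  assumes "is_leaf G v w"
  shows "{v, w} \<in> snd G" and "w \<in> fst (delete_vertex G v)"
    and "\<forall>e\<in>snd G. v \<in> e \<longrightarrow> e = {v, w}"
proof -
  show vw: "{v, w} \<in> snd G"
    using assms unfolding is_leaf_def by blast
  moreover have "simple_graph G" and "w \<noteq> v"
    using assms unfolding is_leaf_def by simp_all
  ultimately show "w \<in> fst (delete_vertex G v)"
    unfolding simple_graph_def delete_vertex_def by auto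
  show "\<forall>e\<in>snd G. v \<in> e \<longrightarrow> e = {v, w}"
    using assms unfolding is_leaf_def by blast
qed

lemma connected_graph_delete_pendant:
  assumes conn: "connected_graph G" and "w \<noteq> v" and pendant: "\<forall>e\<in>snd G. v \<in> e \<longrightarrow> e = {v, w}"
  shows "connected_graph (delete_vertex G v)"
  unfolding connected_graph_def
proof (intro ballI)
  fix a b
  assume "a \<in> fst (delete_vertex G v)" and "b \<in> fst (delete_vertex G v)"
  then have "a \<in> fst G" "a \<noteq> v" "b \<in> fst G" "b \<noteq> v"
    unfolding delete_vertex_def by auto
  moreover have "(adj (snd G))\<^sup>*\<^sup>* a b"
    using conn \<open>a \<in> fst G\<close> \<open>b \<in> fst G\<close> unfolding connected_graph_def by blast
  ultimately show "(adj (snd (delete_vertex G v)))\<^sup>*\<^sup>* a b"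
    using reachable_remove_pendant[OF _ _ _ \<open>w \<noteq> v\<close> pendant] unfolding delete_vertex_def by simp
qed

lemma connected_graph_add_leaf:
  assumes conn: "connected_graph T" and w: "w \<in> fst T"
  shows "connected_graph (add_leaf v w T)"
proof -
  have to_w: "(adj (snd (add_leaf v w T)))\<^sup>*\<^sup>* x w" if "x \<in> fst (add_leaf v w T)" for x
  proof (cases "x = v")
    case True
    then show ?thesis
      unfolding adj_def add_leaf_def by (simp add: r_into_rtranclp)
  next
    case False
    with that have "(adj (snd T))\<^sup>*\<^sup>* x w"
      using conn w unfolding connected_graph_def add_leaf_def by simp
    then show ?thesis
      by (rule reachable_mono[rotated]) (auto simp: add_leaf_def)
  qed
  show ?thesis
    unfolding connected_graph_def
    using rtranclp_trans[OF to_w reachable_sym[OF to_w]] by blast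
qed

lemma acyclic_graph_add_leaf:
  assumes acyclic: "acyclic_graph T" and v_free: "\<forall>e\<in>snd T. v \<notin> e"
  shows "acyclic_graph (add_leaf v w T)"
  unfolding acyclic_graph_def
proof
  assume "\<exists>C. is_cycle (add_leaf v w T) C"
  then obtain vs where vs: "distinct vs" "3 \<le> length vs" "set vs \<subseteq> insert v (fst T)"
    "cycle_edges vs \<subseteq> insert {v, w} (snd T)"
    unfolding is_cycle_def add_leaf_def by auto
  have "v \<notin> set vs"
  proof
    assume "v \<in> set vs"
    moreover have "\<forall>e\<in>insert {v, w} (snd T). v \<in> e \<longrightarrow> e = {v, w}"
      using v_free by auto
    ultimately show False
      using cycle_vertex_not_pendant[OF vs(1,2,4)] by blast
  qed
  then have "cycle_edges vs \<subseteq> snd T" and "set vs \<subseteq> fst T"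
    using vs(3,4) Union_cycle_edges[of vs] by auto
  then have "is_cycle T (cycle_edges vs)"
    unfolding is_cycle_def using vs(1,2) by blast
  with acyclic show False
    unfolding acyclic_graph_def by blast
qed

lemma acyclic_graph_delete_vertex: "acyclic_graph G \<Longrightarrow> acyclic_graph (delete_vertex G v)"
  using is_cycle_mono[of "delete_vertex G v" _ G] unfolding acyclic_graph_def delete_vertex_def by auto

lemma is_tree_singleton: "is_tree ({v}, {})"
proof -
  have "\<not> is_cycle ({v}, {}) C" for C
  proof
    assume "is_cycle ({v}, {}) C"
    then obtain vs where "distinct vs" "3 \<le> length vs" "set vs \<subseteq> {v}"
      unfolding is_cycle_def by auto
    then have "length vs \<le> card {v}"
      using card_mono[of "{v}" "set vs"] distinct_card[of vs] by simp
    with \<open>3 \<le> length vs\<close> show False by simp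
  qed
  then show ?thesis
    unfolding is_tree_def connected_graph_def acyclic_graph_def by auto
qed

lemma singleton_in_subtrees: "v \<in> fst G \<Longrightarrow> ({v}, {}) \<in> subtrees G"
  unfolding subtrees_def subgraph_def using is_tree_singleton by simp

lemma subtree_singleton:
  assumes simple: "simple_graph G" and H: "H \<in> subtrees G" and "fst H = {v}"
  shows "H = ({v}, {})"
proof -
  have "snd H = {}"
  proof (rule equals0I)
    fix e
    assume "e \<in> snd H"
    then have "e \<subseteq> {v}" and "card e = 2"
      using simple H \<open>fst H = {v}\<close> unfolding subtrees_def subgraph_def simple_graph_def by auto
    then show False
      using card_mono[of "{v}" e] by simp
  qed
  with \<open>fst H = {v}\<close> show ?thesis
    by (simp add: prod_eq_iff)
qed

lemma subtrees_delete_vertex: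
  "{T \<in> subtrees G. v \<notin> fst T} = subtrees (delete_vertex G v)"
  unfolding subtrees_def subgraph_def delete_vertex_def by auto

lemma delete_vertex_add_leaf:
  assumes "T \<in> subtrees (delete_vertex G v)"
  shows "delete_vertex (add_leaf v w T) v = T"
proof -
  have "v \<notin> fst T" and "\<forall>e\<in>snd T. v \<notin> e"
    using assms unfolding subtrees_def subgraph_def delete_vertex_def by auto
  then show ?thesis
    unfolding delete_vertex_def add_leaf_def by (auto simp: prod_eq_iff)
qed

lemma add_leaf_in_subtrees:
  assumes leaf: "is_leaf G v w" and T: "T \<in> subtrees (delete_vertex G v)" and w: "w \<in> fst T"
  shows "add_leaf v w T \<in> subtrees G"
proof -
  have sub: "subgraph T (delete_vertex G v)" and tree: "is_tree T"
    using T unfolding subtrees_def by auto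
  have "v \<in> fst G"
    using leaf unfolding is_leaf_def by simp
  then have "subgraph (add_leaf v w T) G"
    using sub w is_leaf_neighbour(1)[OF leaf]
    unfolding subgraph_def delete_vertex_def add_leaf_def by auto
  moreover have "\<forall>e\<in>snd T. v \<notin> e"
    using sub unfolding subgraph_def delete_vertex_def by auto
  ultimately show ?thesis
    using tree connected_graph_add_leaf[OF _ w] acyclic_graph_add_leaf[of T v w]
    unfolding subtrees_def is_tree_def add_leaf_def by simp
qed

lemma delete_leaf_in_subtrees:
  assumes leaf: "is_leaf G v w" and H: "H \<in> subtrees G" and v: "v \<in> fst H" and "fst H \<noteq> {v}"
  shows "delete_vertex H v \<in> subtrees (delete_vertex G v)" and "w \<in> fst (delete_vertex H v)"
    and "H = add_leaf v w (delete_vertex H v)"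
proof -
  have sub: "subgraph H G" and tree: "is_tree H"
    using H unfolding subtrees_def by auto
  have wv: "w \<noteq> v"
    using leaf unfolding is_leaf_def by simp
  have pendant: "\<forall>e\<in>snd H. v \<in> e \<longrightarrow> e = {v, w}"
    using sub is_leaf_neighbour(3)[OF leaf] unfolding subgraph_def by blast
  obtain y where y: "y \<in> fst H" "y \<noteq> v"
    using \<open>fst H \<noteq> {v}\<close> v by blast
  then have "(adj (snd H))\<^sup>*\<^sup>* y v"
    using tree v unfolding is_tree_def connected_graph_def by blast
  then obtain z z' where "{z, z'} \<in> snd H" and "z' \<notin> - {v}"
    using reachable_crossing_edge[of "snd H" y v "- {v}"] y(2) by auto
  then have vw: "{v, w} \<in> snd H"
    using pendant by auto
  have "insert {v, w} {e \<in> snd H. v \<notin> e} = snd H"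
    using vw pendant by blast
  then show "H = add_leaf v w (delete_vertex H v)"
    using v unfolding add_leaf_def delete_vertex_def by (auto simp: prod_eq_iff)
  show w: "w \<in> fst (delete_vertex H v)"
    using vw wv sub unfolding subgraph_def delete_vertex_def by auto
  have "subgraph (delete_vertex H v) (delete_vertex G v)"
    using sub unfolding subgraph_def delete_vertex_def by auto
  then show "delete_vertex H v \<in> subtrees (delete_vertex G v)"
    using tree w connected_graph_delete_pendant[OF _ wv pendant] acyclic_graph_delete_vertex[of H v]
    unfolding subtrees_def is_tree_def by auto
qed

lemma subtrees_through_insert_leaf:
  assumes leaf: "is_leaf G v w"
  shows "subtrees_through G (insert v A) =
    (if A \<subseteq> {v} then {({v}, {})} else {}) \<union>
    add_leaf v w ` subtrees_through (delete_vertex G v) (insert w (A - {v}))"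
    (is "?L = ?S \<union> ?I")
proof (intro equalityI subsetI)
  fix H
  assume H: "H \<in> ?L"
  then have H_sub: "H \<in> subtrees G" and vA: "insert v A \<subseteq> fst H"
    unfolding subtrees_through_def by auto
  show "H \<in> ?S \<union> ?I"
  proof (cases "fst H = {v}")
    case True
    have "simple_graph G"
      using leaf unfolding is_leaf_def by simp
    then have "H = ({v}, {})"
      by (rule subtree_singleton[OF _ H_sub True])
    with vA show ?thesis
      by simp
  next
    case False
    note del = delete_leaf_in_subtrees[OF leaf H_sub _ False]
    have "delete_vertex H v \<in> subtrees_through (delete_vertex G v) (insert w (A - {v}))"
      using del vA unfolding subtrees_through_def delete_vertex_def by auto
    then show ?thesis
      using del(3) vA by blast
  qed
next
  fix H
  assume "H \<in> ?S \<union> ?I"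
  then show "H \<in> ?L"
  proof
    assume "H \<in> ?S"
    moreover have "v \<in> fst G"
      using leaf unfolding is_leaf_def by simp
    ultimately show ?thesis
      using singleton_in_subtrees[of v G] unfolding subtrees_through_def by (auto split: if_splits)
  next
    assume "H \<in> ?I"
    then obtain T where "H = add_leaf v w T" and "T \<in> subtrees (delete_vertex G v)"
      and "insert w (A - {v}) \<subseteq> fst T"
      unfolding subtrees_through_def by blast
    then show ?thesis
      using add_leaf_in_subtrees[OF leaf] unfolding subtrees_through_def add_leaf_def by auto
  qed
qed

lemma card_subtrees_through_leaf:
  assumes leaf: "is_leaf G v w"
  shows "card (subtrees_through G A) =
    (if v \<in> A then 0 else card (subtrees_through (delete_vertex G v) A)) +
    (if A \<subseteq> {v} then 1 else 0) +
    card (subtrees_through (delete_vertex G v) (insert w (A - {v})))"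
proof -
  let ?W = "subtrees_through (delete_vertex G v) (insert w (A - {v}))"
  have simple: "simple_graph G"
    using leaf unfolding is_leaf_def by simp
  have avoid: "{T \<in> subtrees_through G A. v \<notin> fst T} =
      (if v \<in> A then {} else subtrees_through (delete_vertex G v) A)"
    using subtrees_delete_vertex[of G v] unfolding subtrees_through_def by auto
  have "subtrees_through G A = {T \<in> subtrees_through G A. v \<notin> fst T} \<union> subtrees_through G (insert v A)"
    unfolding subtrees_through_def by auto
  moreover have "card ({T \<in> subtrees_through G A. v \<notin> fst T} \<union> subtrees_through G (insert v A)) =
      card {T \<in> subtrees_through G A. v \<notin> fst T} + card (subtrees_through G (insert v A))"
  proof (rule card_Un_disjoint)
    show "finite {T \<in> subtrees_through G A. v \<notin> fst T}"
      using finite_subtrees_through[OF simple] by simp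
    show "finite (subtrees_through G (insert v A))"
      using finite_subtrees_through[OF simple] .
  qed (auto simp: subtrees_through_def)
  ultimately have "card (subtrees_through G A) =
      card {T \<in> subtrees_through G A. v \<notin> fst T} + card (subtrees_through G (insert v A))"
    by simp
  moreover have "inj_on (add_leaf v w) ?W"
    by (rule inj_on_inverseI[of _ "\<lambda>H. delete_vertex H v"])
      (auto simp: subtrees_through_def delete_vertex_add_leaf)
  moreover have "({v}, {}) \<notin> add_leaf v w ` ?W"
    unfolding add_leaf_def by auto
  moreover have "finite ?W"
    using finite_subtrees_through[OF simple_graph_delete_vertex[OF simple]] .
  ultimately show ?thesis
    unfolding avoid subtrees_through_insert_leaf[OF leaf] by (simp add: card_image)
qed

lemma card_subtrees_delete_leaf:
  "is_leaf G v w \<Longrightarrow>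
    card (subtrees G) = card (subtrees (delete_vertex G v)) + 1 +
      card (subtrees_through (delete_vertex G v) {w})"
  using card_subtrees_through_leaf[of G v w "{}"] by simp

lemma card_subtrees_through_leaf_self:
  "is_leaf G v w \<Longrightarrow>
    card (subtrees_through G {v}) = 1 + card (subtrees_through (delete_vertex G v) {w})"
  using card_subtrees_through_leaf[of G v w "{v}"] by simp

lemma card_subtrees_through_leaf_other:
  "is_leaf G v w \<Longrightarrow> u \<noteq> v \<Longrightarrow>
    card (subtrees_through G {u}) = card (subtrees_through (delete_vertex G v) {u}) +
      card (subtrees_through (delete_vertex G v) {u, w})"
  using card_subtrees_through_leaf[of G v w "{u}"] by (simp add: insert_commute)

section \<open>Unicyclic graphs\<close>

lemma unicyclic_cycle:
  assumes "unicyclic H"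
  obtains vs where "distinct vs" and "3 \<le> length vs" and "set vs \<subseteq> fst H"
    and "cycle_edges vs \<subseteq> snd H" and "\<And>C. is_cycle H C \<Longrightarrow> C = cycle_edges vs"
proof -
  obtain C where C: "is_cycle H C" and unique: "\<And>C'. is_cycle H C' \<Longrightarrow> C' = C"
    using assms unfolding unicyclic_def by blast
  then obtain vs where vs: "distinct vs" "3 \<le> length vs" "set vs \<subseteq> fst H" "C = cycle_edges vs"
    "C \<subseteq> snd H"
    unfolding is_cycle_def by blast
  show ?thesis
    by (rule that[of vs]) (use vs unique in simp_all)
qed

lemma girth_unique_cycle:
  assumes "is_cycle H C" and "\<And>C'. is_cycle H C' \<Longrightarrow> C' = C"
  shows "girth H = card C"
  unfolding girth_def
proof (rule Least_equality)
  show "\<exists>C'. is_cycle H C' \<and> card C' = card C"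
    using assms(1) by blast
  show "card C \<le> k" if "\<exists>C'. is_cycle H C' \<and> card C' = k" for k
    using that assms(2) by blast
qed

lemma girth_unicyclic:
  assumes "distinct vs" and "3 \<le> length vs" and "set vs \<subseteq> fst H" and "cycle_edges vs \<subseteq> snd H"
    and "\<And>C. is_cycle H C \<Longrightarrow> C = cycle_edges vs"
  shows "girth H = length vs"
proof -
  have "is_cycle H (cycle_edges vs)"
    unfolding is_cycle_def using assms(1-4) by blast
  then show ?thesis
    using girth_unique_cycle[OF _ assms(5)] card_cycle_edges[OF assms(1,2)] by simp
qed

lemma connected_graph_remove_cycle_edge:
  assumes conn: "connected_graph G" and vs: "distinct vs" "3 \<le> length vs" "cycle_edges vs \<subseteq> snd G"
  shows "connected_graph (fst G, snd G - {{vs ! 0, vs ! 1}})"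
proof -
  let ?k = "length vs"
  let ?E = "snd G - {{vs ! 0, vs ! 1}}"
  have other: "vs ! j \<noteq> vs ! 0" "vs ! j \<noteq> vs ! 1" if "2 \<le> j" "j < ?k" for j
  proof -
    have "0 < ?k" "1 < ?k"
      using vs(2) by linarith+
    with that show "vs ! j \<noteq> vs ! 0" "vs ! j \<noteq> vs ! 1"
      using nth_eq_iff_index_eq[OF vs(1), of j] by auto
  qed
  have along: "(adj ?E)\<^sup>*\<^sup>* (vs ! 1) (vs ! j)" if "1 \<le> j" "j < ?k" for j
    using that
  proof (induction j rule: dec_induct)
    case (step j)
    have "{vs ! j, vs ! Suc j} \<in> snd G"
      using cycle_edges_Suc[of j vs] step.prems vs(3) by auto
    moreover have "{vs ! j, vs ! Suc j} \<noteq> {vs ! 0, vs ! 1}"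
      using other[of "Suc j"] step.hyps step.prems by (auto simp: doubleton_eq_iff)
    ultimately have "adj ?E (vs ! j) (vs ! Suc j)"
      unfolding adj_def by simp
    with step show ?case
      by (meson Suc_lessD rtranclp.rtrancl_into_rtrancl)
  qed simp
  have "vs \<noteq> []"
    using vs(2) by auto
  then have "{vs ! (?k - 1), vs ! 0} \<in> snd G"
    using cycle_edges_last vs(3) by blast
  moreover have "{vs ! (?k - 1), vs ! 0} \<noteq> {vs ! 0, vs ! 1}"
    using other[of "?k - 1"] vs(2) by (auto simp: doubleton_eq_iff)
  ultimately have "adj ?E (vs ! (?k - 1)) (vs ! 0)"
    unfolding adj_def by simp
  moreover have "(adj ?E)\<^sup>*\<^sup>* (vs ! 1) (vs ! (?k - 1))"
    using along[of "?k - 1"] vs(2) by simp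
  ultimately have "(adj ?E)\<^sup>*\<^sup>* (vs ! 1) (vs ! 0)"
    by (simp add: rtranclp.rtrancl_into_rtrancl)
  then have "(adj ?E)\<^sup>*\<^sup>* (vs ! 0) (vs ! 1)"
    by (rule reachable_sym)
  then show ?thesis
    using conn reachable_remove_edge unfolding connected_graph_def by fastforce
qed

lemma unicyclic_delete_cycle_edge_in_subtrees:
  assumes uc: "unicyclic H"
    and vs: "distinct vs" "3 \<le> length vs" "set vs \<subseteq> fst H" "cycle_edges vs \<subseteq> snd H"
    and unique: "\<And>C. is_cycle H C \<Longrightarrow> C = cycle_edges vs"
  shows "(fst H, snd H - {{vs ! 0, vs ! 1}}) \<in> subtrees H"
proof -
  let ?e = "{vs ! 0, vs ! 1}"
  let ?T = "(fst H, snd H - {?e})"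
  have "connected_graph ?T"
    using uc connected_graph_remove_cycle_edge[OF _ vs(1,2,4)] unfolding unicyclic_def by simp
  moreover have "acyclic_graph ?T"
    unfolding acyclic_graph_def
  proof
    assume "\<exists>C. is_cycle ?T C"
    then obtain C where C: "is_cycle ?T C"
      by blast
    then have "C = cycle_edges vs"
      using unique is_cycle_mono[of ?T C H] by force
    moreover have "?e \<in> cycle_edges vs"
      using cycle_edges_Suc[of 0 vs] vs(2) by simp
    moreover have "C \<subseteq> snd ?T"
      using C unfolding is_cycle_def by blast
    ultimately show False
      by auto
  qed
  moreover have "subgraph ?T H"
    using uc unfolding unicyclic_def simple_graph_def subgraph_def by auto
  moreover have "fst H \<noteq> {}"
    using vs(2,3) by auto
  ultimately show ?thesis
    unfolding subtrees_def is_tree_def by simp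
qed

lemma card_subtrees_through_unicyclic_pos:
  assumes uc: "unicyclic H" and A: "A \<subseteq> fst H"
  shows "0 < card (subtrees_through H A)"
proof -
  obtain vs where vs: "distinct vs" "3 \<le> length vs" "set vs \<subseteq> fst H" "cycle_edges vs \<subseteq> snd H"
    and unique: "\<And>C. is_cycle H C \<Longrightarrow> C = cycle_edges vs"
    using unicyclic_cycle[OF uc] by metis
  then have "(fst H, snd H - {{vs ! 0, vs ! 1}}) \<in> subtrees_through H A"
    using unicyclic_delete_cycle_edge_in_subtrees[OF uc vs unique] A
    unfolding subtrees_through_def by simp
  moreover have "finite (subtrees_through H A)"
    using uc finite_subtrees_through unfolding unicyclic_def by blast
  ultimately show ?thesis
    by (auto simp: card_gt_0_iff)
qed

lemma unicyclic_delete_leaf: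
  assumes uc: "unicyclic H" and leaf: "is_leaf H x w"
  shows "unicyclic (delete_vertex H x)" and "girth (delete_vertex H x) = girth H"
proof -
  obtain vs where vs: "distinct vs" "3 \<le> length vs" "set vs \<subseteq> fst H" "cycle_edges vs \<subseteq> snd H"
    and unique: "\<And>C. is_cycle H C \<Longrightarrow> C = cycle_edges vs"
    using unicyclic_cycle[OF uc] by metis
  let ?H = "delete_vertex H x"
  have pendant: "\<forall>e\<in>snd H. x \<in> e \<longrightarrow> e = {x, w}"
    by (rule is_leaf_neighbour(3)[OF leaf])
  have "x \<notin> set vs"
    using cycle_vertex_not_pendant[OF vs(1,2,4) _ pendant] by blast
  then have vs': "set vs \<subseteq> fst ?H" "cycle_edges vs \<subseteq> snd ?H"
    using vs(3,4) Union_cycle_edges[of vs] unfolding delete_vertex_def by auto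
  have unique': "C = cycle_edges vs" if "is_cycle ?H C" for C
    using unique is_cycle_mono[OF that, of H] unfolding delete_vertex_def by auto
  have "w \<noteq> x"
    using leaf unfolding is_leaf_def by simp
  then have "connected_graph ?H"
    using uc connected_graph_delete_pendant[OF _ _ pendant] unfolding unicyclic_def by simp
  moreover have "simple_graph ?H"
    using uc unfolding unicyclic_def by (simp add: simple_graph_delete_vertex)
  moreover have "is_cycle ?H (cycle_edges vs)"
    unfolding is_cycle_def using vs(1,2) vs' by blast
  ultimately show "unicyclic ?H"
    unfolding unicyclic_def using unique' by blast
  show "girth ?H = girth H"
    using girth_unicyclic[OF vs(1,2) vs' unique'] girth_unicyclic[OF vs unique] by simp
qed

definition pendant_path :: "'a graph \<Rightarrow> 'a set \<Rightarrow> 'a list \<Rightarrow> bool" where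
  "pendant_path H S p \<longleftrightarrow> distinct p \<and> 2 \<le> length p \<and> hd p \<in> S \<and> set (tl p) \<inter> S = {}
    \<and> set p \<subseteq> fst H \<and> walk (snd H) p"

lemma pendant_path_last:
  assumes "pendant_path H S p"
  shows "last p \<in> set (tl p)" and "last p \<notin> S"
proof -
  have "tl p \<noteq> []"
    using assms unfolding pendant_path_def by (cases p) auto
  then show "last p \<in> set (tl p)"
    by (metis last_in_set last_tl)
  then show "last p \<notin> S"
    using assms unfolding pendant_path_def by blast
qed

lemma pendant_path_snoc:
  assumes p: "pendant_path H S p" and "{last p, y} \<in> snd H" and "y \<in> fst H"
    and "y \<notin> set p" and "y \<notin> S"
  shows "pendant_path H S (p @ [y])"
proof -
  have "p \<noteq> []"
    using p unfolding pendant_path_def by auto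
  then show ?thesis
    using assms walk_append[OF _ walk_singleton, of "snd H" p y]
    unfolding pendant_path_def by (auto simp: tl_append2)
qed

lemma pendant_path_no_cycle_through_end:
  assumes unique: "\<And>C. is_cycle H C \<Longrightarrow> C = cycle_edges vs" and p: "pendant_path H (set vs) p"
    and L: "distinct L" "3 \<le> length L" "set L \<subseteq> fst H" "walk (snd H) L" "{last L, hd L} \<in> snd H"
    and "last p \<in> set L"
  shows False
proof -
  have "cycle_edges L = cycle_edges vs"
    using unique is_cycle_closed_walk[OF L] by blast
  then have "set L = set vs"
    using Union_cycle_edges by metis
  with \<open>last p \<in> set L\<close> pendant_path_last(2)[OF p] show False
    by simp
qed

lemma pendant_path_back_edge:
  assumes unique: "\<And>C. is_cycle H C \<Longrightarrow> C = cycle_edges vs" and p: "pendant_path H (set vs) p"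
    and y: "{last p, y} \<in> snd H" "y \<in> set p" "y \<noteq> last p"
  shows "y = p ! (length p - 2)"
proof (rule ccontr)
  assume y_ne: "y \<noteq> p ! (length p - 2)"
  let ?n = "length p"
  obtain i where i: "i < ?n" "p ! i = y"
    using y(2) by (auto simp: in_set_conv_nth)
  have "p \<noteq> []"
    using i by auto
  then have "i \<noteq> ?n - 1"
    using i y(3) by (auto simp: last_conv_nth)
  with i y_ne have "i + 3 \<le> ?n"
    by (cases "i = ?n - 2") auto
  let ?L = "drop i p"
  have L: "distinct ?L" "set ?L \<subseteq> fst H" "walk (snd H) ?L"
    using p walk_drop set_drop_subset unfolding pendant_path_def by (fastforce+)
  have ends: "last ?L = last p" "hd ?L = y"
    using i by (simp_all add: hd_drop_conv_nth)
  have "last p \<in> set ?L"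
    using i last_in_set[of ?L] ends(1) by auto
  moreover have "{last ?L, hd ?L} \<in> snd H"
    using y(1) ends by simp
  moreover have "3 \<le> length ?L"
    using \<open>i + 3 \<le> ?n\<close> by simp
  ultimately show False
    using pendant_path_no_cycle_through_end[OF unique p L(1) _ L(2,3)] by blast
qed

lemma pendant_path_edge_to_cycle:
  assumes unique: "\<And>C. is_cycle H C \<Longrightarrow> C = cycle_edges vs"
    and vs: "distinct vs" "set vs \<subseteq> fst H" "cycle_edges vs \<subseteq> snd H"
    and p: "pendant_path H (set vs) p" and y: "{last p, y} \<in> snd H" "y \<in> set vs"
  shows "y \<in> set p"
proof (rule ccontr)
  assume "y \<notin> set p"
  obtain R where R: "distinct R" "set R = set vs" "cycle_edges R = cycle_edges vs" "R ! 0 = y"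
    using rotate_to_front[OF y(2)] vs(1) by metis
  have p_facts: "distinct p" "2 \<le> length p" "hd p \<in> set vs" "set (tl p) \<inter> set vs = {}"
    "set p \<subseteq> fst H" "walk (snd H) p"
    using p unfolding pendant_path_def by auto
  then have "p \<noteq> []" and "tl p \<noteq> []"
    by (cases p; auto)+
  obtain j where j: "j < length R" "R ! j = hd p"
    using p_facts(3) R(2) by (metis in_set_conv_nth)
  have "j \<noteq> 0"
    using j R(4) \<open>y \<notin> set p\<close> \<open>p \<noteq> []\<close> by (metis list.set_sel(1))
  let ?A = "take (Suc j) R"
  let ?L = "?A @ tl p"
  have A: "?A \<noteq> []" "last ?A = hd p" "hd ?A = y" "set ?A \<subseteq> set vs"
    using j R(2,4) set_take_subset[of "Suc j" R] by (auto simp: take_Suc_conv_app_nth hd_conv_nth nth_append)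
  have "walk (snd H) ?L"
  proof (rule walk_append[OF walk_take[OF walk_cycle_edges] _ A(1) \<open>tl p \<noteq> []\<close>])
    show "cycle_edges R \<subseteq> snd H"
      using R(3) vs(3) by simp
    show "walk (snd H) (tl p)"
      using walk_drop[OF p_facts(6), of 1] by (simp add: drop_Suc)
    show "{last ?A, hd (tl p)} \<in> snd H"
      using walk_first_edge[OF p_facts(6,2)] A(2) by simp
  qed
  moreover have "distinct ?L"
    using R(1) p_facts(1,4) A(4) by (auto simp: distinct_tl)
  moreover have "3 \<le> length ?L"
    using j \<open>j \<noteq> 0\<close> p_facts(2) by simp
  moreover have "set ?L \<subseteq> fst H"
    using A(4) vs(2) p_facts(5) \<open>p \<noteq> []\<close> by (auto dest: list.set_sel(2))
  moreover have "last ?L = last p" and "hd ?L = y"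
    using A \<open>tl p \<noteq> []\<close> \<open>p \<noteq> []\<close> by (simp_all add: last_tl)
  moreover have "last p \<in> set ?L"
    using pendant_path_last(1)[OF p] by simp
  ultimately show False
    using pendant_path_no_cycle_through_end[OF unique p, of ?L] y(1) by (simp add: insert_commute)
qed

lemma longest_pendant_path_end_neighbour:
  assumes unique: "\<And>C. is_cycle H C \<Longrightarrow> C = cycle_edges vs"
    and vs: "distinct vs" "set vs \<subseteq> fst H" "cycle_edges vs \<subseteq> snd H"
    and p: "pendant_path H (set vs) p"
    and longest: "\<And>q. pendant_path H (set vs) q \<Longrightarrow> length q \<le> length p"
    and y: "{last p, y} \<in> snd H" "y \<in> fst H" "y \<noteq> last p"
  shows "y = p ! (length p - 2)"
proof -
  have "y \<in> set p"
  proof (rule ccontr)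
    assume "y \<notin> set p"
    moreover from this have "y \<notin> set vs"
      using pendant_path_edge_to_cycle[OF unique vs p y(1)] by blast
    ultimately have "pendant_path H (set vs) (p @ [y])"
      using pendant_path_snoc[OF p y(1,2)] by simp
    then show False
      using longest[of "p @ [y]"] by simp
  qed
  then show ?thesis
    using pendant_path_back_edge[OF unique p y(1) _ y(3)] by simp
qed

lemma is_leaf_last_longest_pendant_path:
  assumes simple: "simple_graph H"
    and unique: "\<And>C. is_cycle H C \<Longrightarrow> C = cycle_edges vs"
    and vs: "distinct vs" "set vs \<subseteq> fst H" "cycle_edges vs \<subseteq> snd H"
    and p: "pendant_path H (set vs) p"
    and longest: "\<And>q. pendant_path H (set vs) q \<Longrightarrow> length q \<le> length p"
  shows "is_leaf H (last p) (p ! (length p - 2))"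
proof -
  let ?x = "last p" and ?w = "p ! (length p - 2)"
  have p_facts: "distinct p" "2 \<le> length p" "set p \<subseteq> fst H" "walk (snd H) p"
    using p unfolding pendant_path_def by auto
  have wx: "{?w, ?x} \<in> snd H"
    by (rule walk_last_edge[OF p_facts(4,2)])
  have "?x = p ! (length p - 1)"
    using p_facts(2) by (cases p) (auto simp: last_conv_nth)
  then have "?w \<noteq> ?x"
    using nth_eq_iff_index_eq[OF p_facts(1), of "length p - 2" "length p - 1"] p_facts(2) by simp
  have pendant: "e = {?x, ?w}" if e: "e \<in> snd H" "?x \<in> e" for e
  proof -
    have "card e = 2" and "e \<subseteq> fst H"
      using simple e(1) unfolding simple_graph_def by auto
    then obtain y where "e = {?x, y}" and "y \<in> fst H" and "y \<noteq> ?x"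
      using e(2) by (auto simp: card_2_iff)
    then show ?thesis
      using longest_pendant_path_end_neighbour[OF unique vs p longest] e(1) by simp
  qed
  have "{e \<in> snd H. ?x \<in> e} = {{?x, ?w}}"
  proof
    show "{e \<in> snd H. ?x \<in> e} \<subseteq> {{?x, ?w}}"
      using pendant by blast
    show "{{?x, ?w}} \<subseteq> {e \<in> snd H. ?x \<in> e}"
      using wx by (simp add: insert_commute)
  qed
  moreover have "?x \<in> fst H"
    using p_facts(2,3) by (cases p) auto
  ultimately show ?thesis
    unfolding is_leaf_def using simple \<open>?w \<noteq> ?x\<close> by simp
qed

lemma unicyclic_has_leaf:
  assumes uc: "unicyclic H" and "girth H < card (fst H)"
  obtains x w where "is_leaf H x w"
proof -
  obtain vs where vs: "distinct vs" "3 \<le> length vs" "set vs \<subseteq> fst H" "cycle_edges vs \<subseteq> snd H"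
    and unique: "\<And>C. is_cycle H C \<Longrightarrow> C = cycle_edges vs"
    using unicyclic_cycle[OF uc] by metis
  have simple: "simple_graph H" and conn: "connected_graph H"
    using uc unfolding unicyclic_def by simp_all
  have "card (set vs) < card (fst H)"
    using assms(2) girth_unicyclic[OF vs unique] distinct_card[OF vs(1)] by simp
  then have "set vs \<noteq> fst H"
    by auto
  then obtain b0 where "b0 \<in> fst H" "b0 \<notin> set vs"
    using vs(3) by auto
  moreover have "vs ! 0 \<in> set vs"
    using vs(2) by (cases vs) auto
  ultimately have "(adj (snd H))\<^sup>*\<^sup>* (vs ! 0) b0"
    using conn vs(3) unfolding connected_graph_def by blast
  then obtain a b where ab: "{a, b} \<in> snd H" "a \<in> set vs" "b \<notin> set vs"
    using reachable_crossing_edge[OF _ \<open>vs ! 0 \<in> set vs\<close> \<open>b0 \<notin> set vs\<close>] by blast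
  then have "{a, b} \<subseteq> fst H" and "a \<noteq> b"
    using simple unfolding simple_graph_def by auto
  then have start: "pendant_path H (set vs) [a, b]"
    using ab unfolding pendant_path_def walk_def by (auto simp: less_Suc_eq)
  have "length q < card (fst H) + 1" if "pendant_path H (set vs) q" for q
  proof -
    have "length q = card (set q)"
      using that distinct_card unfolding pendant_path_def by metis
    also have "\<dots> \<le> card (fst H)"
      using that simple card_mono unfolding pendant_path_def simple_graph_def by metis
    finally show ?thesis
      by simp
  qed
  then obtain p where "pendant_path H (set vs) p"
    and "\<And>q. pendant_path H (set vs) q \<Longrightarrow> length q \<le> length p"
    using Lattices_Big.ex_has_greatest_nat[of "pendant_path H (set vs)" "[a, b]" length] start by metis
  then show ?thesis
    using that is_leaf_last_longest_pendant_path[OF simple unique vs(1,3,4)] by blast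
qed

lemma unicyclic_chord_free:
  assumes unique: "\<And>C. is_cycle H C \<Longrightarrow> C = cycle_edges vs"
    and vs: "distinct vs" "3 \<le> length vs" "set vs \<subseteq> fst H" "cycle_edges vs \<subseteq> snd H"
    and e: "e \<in> snd H" "e \<subseteq> set vs" "card e = 2"
  shows "e \<in> cycle_edges vs"
proof -
  obtain a b where ab: "e = {a, b}" "a \<noteq> b"
    using e(3) by (meson card_2_iff)
  have "a \<in> set vs" and "b \<in> set vs"
    using e(2) ab(1) by auto
  obtain R where R: "distinct R" "set R = set vs" "length R = length vs"
    "cycle_edges R = cycle_edges vs" "R ! 0 = a"
    using rotate_to_front[OF \<open>a \<in> set vs\<close>] vs(1) by metis
  obtain j where j: "j < length R" "R ! j = b"
    using \<open>b \<in> set vs\<close> R(2) by (metis in_set_conv_nth)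
  have "j \<noteq> 0"
    using j(2) R(5) ab(2) by (cases j) auto
  show ?thesis
  proof (cases "j = 1")
    case True
    then show ?thesis
      using cycle_edges_Suc[of 0 R] j R(4,5) ab(1) by simp
  next
    case False
    let ?L = "take (Suc j) R"
    have "?L \<noteq> []" and "last ?L = b" and "hd ?L = a"
      using j R(5) by (auto simp: take_Suc_conv_app_nth hd_conv_nth nth_append)
    then have closing: "{last ?L, hd ?L} = e"
      using ab(1) by (simp add: insert_commute)
    have "is_cycle H (cycle_edges ?L)"
    proof (rule is_cycle_closed_walk)
      show "distinct ?L" and "3 \<le> length ?L"
        using R(1) j \<open>j \<noteq> 0\<close> False by auto
      show "set ?L \<subseteq> fst H"
        using set_take_subset[of "Suc j" R] R(2) vs(3) by blast
      show "walk (snd H) ?L"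
        by (rule walk_take[OF walk_cycle_edges]) (use R(4) vs(4) in simp)
      show "{last ?L, hd ?L} \<in> snd H"
        using closing e(1) by simp
    qed
    then have "cycle_edges ?L = cycle_edges vs"
      by (rule unique)
    moreover have "{last ?L, hd ?L} \<in> cycle_edges ?L"
      using cycle_edges_last[OF \<open>?L \<noteq> []\<close>] \<open>?L \<noteq> []\<close> by (simp add: last_conv_nth hd_conv_nth)
    ultimately show ?thesis
      using closing by simp
  qed
qed

lemma unicyclic_card_eq_girth:
  assumes uc: "unicyclic H" and card: "card (fst H) = girth H" and u: "u \<in> fst H"
  obtains R where "distinct R" and "length R = girth H" and "R ! 0 = u"
    and "H = (set R, cycle_edges R)"
proof -
  obtain vs where vs: "distinct vs" "3 \<le> length vs" "set vs \<subseteq> fst H" "cycle_edges vs \<subseteq> snd H"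
    and unique: "\<And>C. is_cycle H C \<Longrightarrow> C = cycle_edges vs"
    using unicyclic_cycle[OF uc] by metis
  have simple: "simple_graph H"
    using uc unfolding unicyclic_def by simp
  have girth: "girth H = length vs"
    by (rule girth_unicyclic[OF vs unique])
  have V: "fst H = set vs"
    using card_subset_eq[OF _ vs(3)] simple card girth distinct_card[OF vs(1)]
    unfolding simple_graph_def by simp
  have E: "snd H = cycle_edges vs"
  proof
    show "snd H \<subseteq> cycle_edges vs"
      using unicyclic_chord_free[OF unique vs] simple V unfolding simple_graph_def by blast
  qed (rule vs(4))
  obtain R where R: "distinct R" "set R = set vs" "length R = length vs"
    "cycle_edges R = cycle_edges vs" "R ! 0 = u"
    using rotate_to_front[of u vs] u V vs(1) by metis
  show ?thesis
    by (rule that[of R]) (use R V E girth in \<open>simp_all add: prod_eq_iff\<close>)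
qed

section \<open>Isomorphic copies\<close>

definition map_graph :: "('a \<Rightarrow> 'b) \<Rightarrow> 'a graph \<Rightarrow> 'b graph" where
  "map_graph f G = (f ` fst G, (`) f ` snd G)"

lemma map_graph_comp: "map_graph f (map_graph g G) = map_graph (f \<circ> g) G"
  unfolding map_graph_def by (simp add: image_comp)

lemma map_graph_id_on:
  assumes "\<And>x. x \<in> fst G \<Longrightarrow> f x = x" and "\<forall>e\<in>snd G. e \<subseteq> fst G"
  shows "map_graph f G = G"
proof -
  have image_id: "f ` e = e" if "e \<subseteq> fst G" for e
  proof -
    have "f ` e = (\<lambda>x. x) ` e"
      by (rule image_cong) (use that assms(1) in auto)
    then show ?thesis
      by simp
  qed
  have "(`) f ` snd G = (\<lambda>e. e) ` snd G"
    by (rule image_cong) (use assms(2) image_id in auto)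
  then show ?thesis
    unfolding map_graph_def using image_id[of "fst G"] by (simp add: prod_eq_iff)
qed

lemma subgraph_map_graph:
  assumes "subgraph T G"
  shows "subgraph (map_graph f T) (map_graph f G)"
proof -
  have "fst T \<subseteq> fst G" "snd T \<subseteq> snd G" "\<forall>e\<in>snd T. e \<subseteq> fst T"
    using assms unfolding subgraph_def by simp_all
  moreover from this(3) have "\<forall>e\<in>(`) f ` snd T. e \<subseteq> f ` fst T"
    by blast
  ultimately show ?thesis
    unfolding subgraph_def map_graph_def by (simp add: image_mono)
qed

lemma connected_graph_map_graph: "connected_graph G \<Longrightarrow> connected_graph (map_graph f G)"
  unfolding connected_graph_def map_graph_def using reachable_image by fastforce

lemma is_cycle_map_graph:
  assumes inj: "inj_on f (fst G)" and "is_cycle G C"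
  shows "is_cycle (map_graph f G) ((`) f ` C)"
proof -
  obtain vs where vs: "distinct vs" "3 \<le> length vs" "set vs \<subseteq> fst G" "C = cycle_edges vs" "C \<subseteq> snd G"
    using assms(2) unfolding is_cycle_def by blast
  have "distinct (map f vs)"
    using vs(1,3) inj distinct_map inj_on_subset by blast
  moreover have "cycle_edges (map f vs) = (`) f ` cycle_edges vs"
  proof -
    have "(i + 1) mod length vs < length vs" if "i < length vs" for i
      using that by (intro mod_less_divisor) linarith
    then show ?thesis
      unfolding cycle_edges_eq_image[of "map f vs"] cycle_edges_eq_image[of vs] image_image length_map
      by (intro image_cong) auto
  qed
  ultimately show ?thesis
    unfolding is_cycle_def map_graph_def using vs by (intro exI[of _ "map f vs"]) auto
qed

lemma map_graph_inv_into_map_graph: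
  assumes "inj_on f (fst G)" and "subgraph T G"
  shows "map_graph (inv_into (fst G) f) (map_graph f T) = T"
  unfolding map_graph_comp using assms
  by (intro map_graph_id_on) (auto simp: subgraph_def inv_into_f_f)

lemma map_graph_map_graph_inv_into:
  assumes "subgraph T (map_graph f G)"
  shows "map_graph f (map_graph (inv_into (fst G) f) T) = T"
  unfolding map_graph_comp using assms
  by (intro map_graph_id_on) (auto simp: subgraph_def map_graph_def f_inv_into_f)

lemma is_tree_map_graph:
  assumes inj: "inj_on f (fst T)" and edges: "\<forall>e\<in>snd T. e \<subseteq> fst T" and tree: "is_tree T"
  shows "is_tree (map_graph f T)"
proof -
  let ?g = "inv_into (fst T) f"
  have "map_graph ?g (map_graph f T) = T"
    using map_graph_inv_into_map_graph[OF inj] edges unfolding subgraph_def by simp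
  moreover have "inj_on ?g (fst (map_graph f T))"
    unfolding map_graph_def by (simp add: inj_on_inv_into)
  ultimately have "is_cycle T ((`) ?g ` C)" if "is_cycle (map_graph f T) C" for C
    using is_cycle_map_graph[OF _ that] by metis
  then show ?thesis
    using tree connected_graph_map_graph
    unfolding is_tree_def acyclic_graph_def map_graph_def by fastforce
qed

lemma map_graph_in_subtrees:
  assumes inj: "inj_on f (fst G)" and T: "T \<in> subtrees G"
  shows "map_graph f T \<in> subtrees (map_graph f G)"
proof -
  have "fst T \<subseteq> fst G" and "\<forall>e\<in>snd T. e \<subseteq> fst T" and "is_tree T"
    using T unfolding subtrees_def subgraph_def by auto
  then have "is_tree (map_graph f T)"
    using is_tree_map_graph inj_on_subset[OF inj] by blast
  moreover have "subgraph (map_graph f T) (map_graph f G)"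
    using T subgraph_map_graph unfolding subtrees_def by blast
  ultimately show ?thesis
    unfolding subtrees_def by simp
qed

lemma card_subtrees_through_map_graph:
  assumes edges: "\<forall>e\<in>snd G. e \<subseteq> fst G" and inj: "inj_on f (fst G)" and A: "A \<subseteq> fst G"
  shows "card (subtrees_through (map_graph f G) (f ` A)) = card (subtrees_through G A)"
proof -
  let ?g = "inv_into (fst G) f"
  have inj_g: "inj_on ?g (fst (map_graph f G))"
    unfolding map_graph_def by (simp add: inj_on_inv_into)
  have "subgraph G G"
    using edges unfolding subgraph_def by simp
  then have GG: "map_graph ?g (map_graph f G) = G"
    by (rule map_graph_inv_into_map_graph[OF inj])
  have "bij_betw (map_graph f) (subtrees_through G A) (subtrees_through (map_graph f G) (f ` A))"
  proof (rule bij_betw_byWitness[where f' = "map_graph ?g"])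
    show "\<forall>T\<in>subtrees_through G A. map_graph ?g (map_graph f T) = T"
      using map_graph_inv_into_map_graph[OF inj] unfolding subtrees_through_def subtrees_def by blast
    show "\<forall>T\<in>subtrees_through (map_graph f G) (f ` A). map_graph f (map_graph ?g T) = T"
      using map_graph_map_graph_inv_into unfolding subtrees_through_def subtrees_def by blast
    show "map_graph f ` subtrees_through G A \<subseteq> subtrees_through (map_graph f G) (f ` A)"
      using map_graph_in_subtrees[OF inj] unfolding subtrees_through_def map_graph_def by auto
    show "map_graph ?g ` subtrees_through (map_graph f G) (f ` A) \<subseteq> subtrees_through G A"
    proof (intro image_subsetI)
      fix T
      assume "T \<in> subtrees_through (map_graph f G) (f ` A)"
      then have T: "T \<in> subtrees (map_graph f G)" and fA: "f ` A \<subseteq> fst T"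
        unfolding subtrees_through_def by auto
      have "A = ?g ` f ` A"
        using A inj by (simp add: image_image inv_into_f_f[OF inj] subset_iff)
      also have "\<dots> \<subseteq> fst (map_graph ?g T)"
        using fA unfolding map_graph_def by auto
      finally show "map_graph ?g T \<in> subtrees_through G A"
        using map_graph_in_subtrees[OF inj_g T] GG unfolding subtrees_through_def by simp
    qed
  qed
  then show ?thesis
    by (simp add: bij_betw_same_card)
qed

section \<open>Cycles with trees attached\<close>

definition cycle_graph :: "nat \<Rightarrow> nat graph" where
  "cycle_graph l = ({0..<l}, cycle_graph_edges l)"

lemma cycle_graph_edges_eq_image: "cycle_graph_edges l = (\<lambda>i. {i, (i + 1) mod l}) ` {..<l}"
  unfolding cycle_graph_edges_def by auto

lemma cycle_graph_edges_subset: "e \<in> cycle_graph_edges l \<Longrightarrow> e \<subseteq> {0..<l}"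
  unfolding cycle_graph_edges_eq_image by auto

lemma card_cycle_graph_edge:
  assumes "3 \<le> l" and "e \<in> cycle_graph_edges l"
  shows "card e = 2"
proof -
  obtain i where i: "i < l" "e = {i, (i + 1) mod l}"
    using assms(2) unfolding cycle_graph_edges_eq_image by auto
  have "(i + 1) mod l \<noteq> i"
  proof (cases "i + 1 < l")
    case False
    then have "i + 1 = l"
      using i(1) by simp
    with assms(1) show ?thesis
      by simp
  qed simp
  with i(2) show ?thesis
    by simp
qed

lemma map_graph_nth_cycle_graph:
  assumes "length R = l"
  shows "map_graph ((!) R) (cycle_graph l) = (set R, cycle_edges R)"
proof -
  have "(!) R ` {0..<l} = set R"
    using assms by (auto simp: in_set_conv_nth)
  moreover have "(`) ((!) R) ` cycle_graph_edges l = cycle_edges R"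
    unfolding cycle_graph_edges_eq_image cycle_edges_eq_image[of R] image_image assms by simp
  ultimately show ?thesis
    unfolding map_graph_def cycle_graph_def by simp
qed

lemma card_subtrees_unicyclic_eq_girth:
  assumes uc: "unicyclic H" and "card (fst H) = girth H" and u: "u \<in> fst H"
  shows "card (subtrees H) = card (subtrees (cycle_graph (girth H)))"
    and "card (subtrees_through H {u}) = card (subtrees_through (cycle_graph (girth H)) {0})"
proof -
  let ?l = "girth H"
  obtain R where R: "distinct R" "length R = ?l" "R ! 0 = u" "H = (set R, cycle_edges R)"
    using unicyclic_card_eq_girth[OF assms] by metis
  then have H: "H = map_graph ((!) R) (cycle_graph ?l)"
    using map_graph_nth_cycle_graph by metis
  have edges: "\<forall>e\<in>snd (cycle_graph ?l). e \<subseteq> fst (cycle_graph ?l)"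
    unfolding cycle_graph_def using cycle_graph_edges_subset by auto
  have inj: "inj_on ((!) R) (fst (cycle_graph ?l))"
    unfolding cycle_graph_def using R(1,2) by (auto intro: inj_on_nth)
  have "0 < ?l"
    using R(2,3) u R(4) by (cases R) auto
  then have "{0} \<subseteq> fst (cycle_graph ?l)"
    unfolding cycle_graph_def by simp
  then have "card (subtrees_through (map_graph ((!) R) (cycle_graph ?l)) ((!) R ` {0})) =
      card (subtrees_through (cycle_graph ?l) {0})"
    by (rule card_subtrees_through_map_graph[OF edges inj])
  then show "card (subtrees_through H {u}) = card (subtrees_through (cycle_graph ?l) {0})"
    using H R(3) by simp
  show "card (subtrees H) = card (subtrees (cycle_graph ?l))"
    using card_subtrees_through_map_graph[OF edges inj, of "{}"] H by simp
qed

definition cycle_with_tree :: "nat \<Rightarrow> nat \<Rightarrow> (nat \<Rightarrow> nat) \<Rightarrow> nat graph" where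
  "cycle_with_tree l n par = ({0..<n}, cycle_graph_edges l \<union> (\<lambda>j. {par j, j}) ` {l..<n})"

definition path_parent :: "nat \<Rightarrow> nat \<Rightarrow> nat" where
  "path_parent l j = (if j = l then 0 else j - 1)"

lemma US_eq_cycle_with_tree: "US n l = cycle_with_tree l n (\<lambda>_. 0)"
  unfolding US_def cycle_with_tree_def setcompr_eq_image atLeastLessThan_def atLeast_def lessThan_def
  by (simp add: Collect_conj_eq)

lemma UP_eq_cycle_with_tree: "UP n l = cycle_with_tree l n (path_parent l)"
  unfolding UP_def cycle_with_tree_def path_parent_def setcompr_eq_image atLeastLessThan_def
    atLeast_def lessThan_def
  by (simp add: Collect_conj_eq)

lemma cycle_with_tree_base: "cycle_with_tree l l par = cycle_graph l"
  unfolding cycle_with_tree_def cycle_graph_def by simp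

lemma simple_graph_cycle_with_tree:
  assumes "3 \<le> l" and "l \<le> n" and par: "\<And>j. l \<le> j \<Longrightarrow> par j < j"
  shows "simple_graph (cycle_with_tree l n par)"
proof -
  have "e \<subseteq> {0..<n} \<and> card e = 2" if "e \<in> cycle_graph_edges l" for e
    using that assms(1,2) cycle_graph_edges_subset card_cycle_graph_edge by fastforce
  moreover have "{par j, j} \<subseteq> {0..<n} \<and> card {par j, j} = 2" if "j \<in> {l..<n}" for j
    using that par[of j] by auto
  ultimately show ?thesis
    unfolding simple_graph_def cycle_with_tree_def by auto
qed

lemma is_leaf_cycle_with_tree:
  assumes "3 \<le> l" and "l \<le> m" and par: "\<And>j. l \<le> j \<Longrightarrow> par j < j"
  shows "is_leaf (cycle_with_tree l (Suc m) par) m (par m)"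
    and "delete_vertex (cycle_with_tree l (Suc m) par) m = cycle_with_tree l m par"
proof -
  have cycle: "m \<notin> e" if "e \<in> cycle_graph_edges l" for e
    using that assms(2) cycle_graph_edges_subset by fastforce
  have tree: "m \<in> {par j, j} \<longleftrightarrow> j = m" if "l \<le> j" and "j < Suc m" for j
    using that par[of j] by auto
  have "{e \<in> snd (cycle_with_tree l (Suc m) par). m \<in> e} = {{m, par m}}"
  proof (intro equalityI subsetI)
    fix e
    assume "e \<in> {e \<in> snd (cycle_with_tree l (Suc m) par). m \<in> e}"
    then obtain j where "l \<le> j" "j < Suc m" "e = {par j, j}" "m \<in> e"
      using cycle unfolding cycle_with_tree_def by auto
    then show "e \<in> {{m, par m}}"
      using tree by (auto simp: insert_commute)
  next
    show "e \<in> {e \<in> snd (cycle_with_tree l (Suc m) par). m \<in> e}" if "e \<in> {{m, par m}}" for e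
      using that assms(2) unfolding cycle_with_tree_def by (auto simp: insert_commute)
  qed
  moreover have "par m \<noteq> m"
    using par[of m] assms(2) by simp
  ultimately show "is_leaf (cycle_with_tree l (Suc m) par) m (par m)"
    unfolding is_leaf_def using simple_graph_cycle_with_tree[OF assms(1) _ par] assms(2)
    by (simp add: cycle_with_tree_def)
  have "{0..<Suc m} - {m} = {0..<m}"
    by auto
  moreover have "{e \<in> cycle_graph_edges l \<union> (\<lambda>j. {par j, j}) ` {l..<Suc m}. m \<notin> e} =
      cycle_graph_edges l \<union> (\<lambda>j. {par j, j}) ` {l..<m}"
  proof -
    have "{j \<in> {l..<Suc m}. m \<notin> {par j, j}} = {l..<m}"
    proof (intro equalityI subsetI)
      fix j
      assume "j \<in> {l..<m}"
      then show "j \<in> {j \<in> {l..<Suc m}. m \<notin> {par j, j}}"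
        using par[of j] by auto
    qed auto
    then show ?thesis
      using cycle by blast
  qed
  ultimately show "delete_vertex (cycle_with_tree l (Suc m) par) m = cycle_with_tree l m par"
    unfolding delete_vertex_def cycle_with_tree_def by simp
qed

lemma US_leaf:
  assumes "3 \<le> l" and "l \<le> m"
  shows "is_leaf (US (Suc m) l) m 0" and "delete_vertex (US (Suc m) l) m = US m l"
  using is_leaf_cycle_with_tree[of l m "\<lambda>_. 0"] assms unfolding US_eq_cycle_with_tree by auto

lemma UP_leaf:
  assumes "3 \<le> l" and "l \<le> m"
  shows "is_leaf (UP (Suc m) l) m (path_parent l m)" and "delete_vertex (UP (Suc m) l) m = UP m l"
  using is_leaf_cycle_with_tree[of l m "path_parent l"] assms
  unfolding UP_eq_cycle_with_tree path_parent_def by auto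

lemma card_subtrees_through_US_centre:
  assumes "3 \<le> l" and "l \<le> m"
  shows "card (subtrees_through (US m l) {0}) = 2 ^ (m - l) * card (subtrees_through (cycle_graph l) {0})"
  using assms(2)
proof (induction m rule: dec_induct)
  case base
  then show ?case
    using cycle_with_tree_base unfolding US_eq_cycle_with_tree by simp
next
  case (step k)
  then have "card (subtrees_through (US (Suc k) l) {0}) = 2 * card (subtrees_through (US k l) {0})"
    using card_subtrees_through_leaf_other[OF US_leaf(1)[OF assms(1) step.hyps(1)], of 0]
      US_leaf(2)[OF assms(1) step.hyps(1)] assms(1) by simp
  with step.IH step.hyps(1) show ?case
    by (simp add: Suc_diff_le)
qed

lemma card_subtrees_through_UP_end:
  assumes "3 \<le> l" and "l \<le> m"
  shows "card (subtrees_through (UP m l) {path_parent l m}) =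
    (m - l) + card (subtrees_through (cycle_graph l) {0})"
  using assms(2)
proof (induction m rule: dec_induct)
  case base
  then show ?case
    using cycle_with_tree_base unfolding UP_eq_cycle_with_tree path_parent_def by simp
next
  case (step k)
  then have "path_parent l (Suc k) = k"
    unfolding path_parent_def by simp
  then have "card (subtrees_through (UP (Suc k) l) {path_parent l (Suc k)}) =
      1 + card (subtrees_through (UP k l) {path_parent l k})"
    using card_subtrees_through_leaf_self[OF UP_leaf(1)[OF assms(1) step.hyps(1)]]
      UP_leaf(2)[OF assms(1) step.hyps(1)] by simp
  with step.IH step.hyps(1) show ?case
    by (simp add: Suc_diff_le)
qed

lemma unicyclic_leaf_reduction:
  assumes uc: "unicyclic H" and "girth H = l" and "card (fst H) = Suc m" and "l \<le> m"
  obtains x w where "is_leaf H x w" and "unicyclic (delete_vertex H x)"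
    and "girth (delete_vertex H x) = l" and "card (fst (delete_vertex H x)) = m"
proof -
  obtain x w where leaf: "is_leaf H x w"
    using unicyclic_has_leaf[OF uc] assms(2-4) by (metis le_imp_less_Suc)
  moreover have "x \<in> fst H" and "finite (fst H)"
    using leaf unfolding is_leaf_def simple_graph_def by simp_all
  then have "card (fst (delete_vertex H x)) = m"
    using assms(3) unfolding delete_vertex_def by simp
  ultimately show ?thesis
    using that unicyclic_delete_leaf[OF uc leaf] assms(2) by blast
qed

lemma card_subtrees_through_unicyclic_bounds:
  assumes "l \<le> m" and "unicyclic H" and "girth H = l" and "card (fst H) = m" and "u \<in> fst H"
  shows "m - l + card (subtrees_through (cycle_graph l) {0}) \<le> card (subtrees_through H {u}) \<and>
    card (subtrees_through H {u}) \<le> 2 ^ (m - l) * card (subtrees_through (cycle_graph l) {0})"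
  using assms
proof (induction m arbitrary: H u rule: dec_induct)
  case base
  then have "card (fst H) = girth H"
    by simp
  then have "card (subtrees_through H {u}) = card (subtrees_through (cycle_graph (girth H)) {0})"
    by (rule card_subtrees_unicyclic_eq_girth(2)[OF base(1) _ base(4)])
  with base(2) show ?case
    by simp
next
  case (step k)
  let ?c = "card (subtrees_through (cycle_graph l) {0})"
  obtain x w where leaf: "is_leaf H x w" and H': "unicyclic (delete_vertex H x)"
    "girth (delete_vertex H x) = l" "card (fst (delete_vertex H x)) = k"
    by (rule unicyclic_leaf_reduction[OF step.prems(1-3) step.hyps(1)])
  let ?H = "delete_vertex H x"
  have w: "w \<in> fst ?H"
    by (rule is_leaf_neighbour(2)[OF leaf])
  have arith: "2 ^ (Suc k - l) * ?c = 2 * (2 ^ (k - l) * ?c)" "Suc k - l = Suc (k - l)"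
    using step.hyps(1) by (simp_all add: Suc_diff_le)
  show ?case
  proof (cases "u = x")
    case True
    have "card (subtrees_through H {u}) = 1 + card (subtrees_through ?H {w})"
      using card_subtrees_through_leaf_self[OF leaf] True by simp
    moreover have "0 < card (subtrees_through ?H {w})"
      using card_subtrees_through_unicyclic_pos[OF H'(1)] w by simp
    moreover note step.IH[OF H' w]
    ultimately show ?thesis
      using arith by linarith
  next
    case False
    then have u: "u \<in> fst ?H"
      using step.prems(4) unfolding delete_vertex_def by simp
    have "card (subtrees_through H {u}) =
        card (subtrees_through ?H {u}) + card (subtrees_through ?H {u, w})"
      using card_subtrees_through_leaf_other[OF leaf False] .
    moreover have "0 < card (subtrees_through ?H {u, w})"
      using card_subtrees_through_unicyclic_pos[OF H'(1)] u w by simp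
    moreover have "card (subtrees_through ?H {u, w}) \<le> card (subtrees_through ?H {u})"
      using H'(1) card_subtrees_through_antimono[of ?H "{u}" "{u, w}"] unfolding unicyclic_def by simp
    moreover note step.IH[OF H' u]
    ultimately show ?thesis
      using arith by linarith
  qed
qed

lemma card_subtrees_unicyclic_bounds:
  assumes "l \<le> m" and "3 \<le> l" and "unicyclic H" and "girth H = l" and "card (fst H) = m"
  shows "card (subtrees (UP m l)) \<le> card (subtrees H) \<and> card (subtrees H) \<le> card (subtrees (US m l))"
  using assms(1,3-5)
proof (induction m arbitrary: H rule: dec_induct)
  case base
  then have "fst H \<noteq> {}"
    using assms(2) by auto
  then obtain u where "u \<in> fst H"
    by blast
  moreover have "card (fst H) = girth H"
    using base by simp
  ultimately have "card (subtrees H) = card (subtrees (cycle_graph (girth H)))"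
    using card_subtrees_unicyclic_eq_girth(1)[OF base(1)] by simp
  with base(2) show ?case
    unfolding US_eq_cycle_with_tree UP_eq_cycle_with_tree cycle_with_tree_base by simp
next
  case (step k)
  obtain x w where leaf: "is_leaf H x w" and H': "unicyclic (delete_vertex H x)"
    "girth (delete_vertex H x) = l" "card (fst (delete_vertex H x)) = k"
    by (rule unicyclic_leaf_reduction[OF step.prems(1-3) step.hyps(1)])
  let ?H = "delete_vertex H x"
  have "card (subtrees H) = card (subtrees ?H) + 1 + card (subtrees_through ?H {w})"
    by (rule card_subtrees_delete_leaf[OF leaf])
  moreover note step.IH[OF H']
  moreover note card_subtrees_through_unicyclic_bounds[OF step.hyps(1) H' is_leaf_neighbour(2)[OF leaf]]
  moreover note card_subtrees_delete_leaf[OF US_leaf(1)[OF assms(2) step.hyps(1)]]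
    card_subtrees_delete_leaf[OF UP_leaf(1)[OF assms(2) step.hyps(1)]]
  moreover note card_subtrees_through_US_centre[OF assms(2) step.hyps(1)]
    card_subtrees_through_UP_end[OF assms(2) step.hyps(1)]
  ultimately show ?case
    using US_leaf(2)[OF assms(2) step.hyps(1)] UP_leaf(2)[OF assms(2) step.hyps(1)] by simp
qed

theorem theorem2:
  fixes G :: "'a graph" and n l :: nat
  assumes "3 \<le> l" and "l \<le> n"
    and "unicyclic G" and "card (fst G) = n" and "girth G = l"
  shows "num_subtrees (US n l) \<ge> num_subtrees G \<and> num_subtrees G \<ge> num_subtrees (UP n l)"
  using card_subtrees_unicyclic_bounds[OF assms(2,1,3,5,4)]
  unfolding num_subtrees_def subtrees_def by simp

end
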